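(* Let $G = (V,E)$ be an $n$-vertex graph. There exists a partition $V = V_1 \cup \ldots \cup V_t$ of $V$ such that: (i) $t \leq 19\,\alpha(G) \log n$; (ii) $\sum_{i \in J} |V_i| \geq n/2$, where $J := \{i \in [t] : |V_i| \geq 0.1\, n/\alpha(G)\}$; (iii) $|V_i| \geq \delta(G)/\log n$ for every $i \in [t]$; (iv) $\kappa(G[V_i]) \geq \frac{\delta(G)}{20\,\alpha(G) \log n}$ for every $i \in [t]$.
   Context: $\alpha(G)$ is the independence number, $\delta(G)$ the minimum degree, and $\kappa(H)$ the vertex connectivity of a graph $H$ (the smallest size of a vertex set whose removal disconnects $H$ or leaves a single vertex). $G[V_i]$ is the induced subgraph. *)

theory Defs
  imports Complex_Main
begin

definition simple_graph :: "'a set \<Rightarrow> ('a \<Rightarrow> 'a \<Rightarrow> bool) \<Rightarrow> bool" where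
  "simple_graph V E \<longleftrightarrow> finite V \<and> (\<forall>u v. E u v \<longrightarrow> E v u) \<and> (\<forall>v. \<not> E v v)
     \<and> (\<forall>u v. E u v \<longrightarrow> u \<in> V \<and> v \<in> V)"

definition independent_set :: "'a set \<Rightarrow> ('a \<Rightarrow> 'a \<Rightarrow> bool) \<Rightarrow> 'a set \<Rightarrow> bool" where
  "independent_set V E I \<longleftrightarrow> I \<subseteq> V \<and> (\<forall>u\<in>I. \<forall>v\<in>I. \<not> E u v)"

definition indep_num :: "'a set \<Rightarrow> ('a \<Rightarrow> 'a \<Rightarrow> bool) \<Rightarrow> nat" where
  "indep_num V E = Max {card I | I. independent_set V E I}"

definition degree :: "'a set \<Rightarrow> ('a \<Rightarrow> 'a \<Rightarrow> bool) \<Rightarrow> 'a \<Rightarrow> nat" where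
  "degree V E v = card {u \<in> V. E v u}"

definition min_degree :: "'a set \<Rightarrow> ('a \<Rightarrow> 'a \<Rightarrow> bool) \<Rightarrow> nat" where
  "min_degree V E = Min (degree V E ` V)"

definition connected_on :: "'a set \<Rightarrow> ('a \<Rightarrow> 'a \<Rightarrow> bool) \<Rightarrow> bool" where
  "connected_on S E \<longleftrightarrow>
     (\<forall>u\<in>S. \<forall>v\<in>S. (\<lambda>x y. x \<in> S \<and> y \<in> S \<and> E x y)\<^sup>*\<^sup>* u v)"

definition vertex_connectivity :: "'a set \<Rightarrow> ('a \<Rightarrow> 'a \<Rightarrow> bool) \<Rightarrow> nat" where
  "vertex_connectivity S E =
     Min {card X | X. X \<subseteq> S \<and> (\<not> connected_on (S - X) E \<or> card (S - X) = 1)}"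

end

(*
  Start from the single part V and cut repeatedly: whenever some part W has a set X with
  |X| < k whose removal disconnects W, move X to a remainder R and replace W by the two sides
  of the cut. The parts stay pairwise non-adjacent, so one vertex from each part gives an
  independent set; hence there are at most alpha parts, the process stops, and fewer than
  alpha k vertices are ever removed. If alpha k <= delta, a cut can never leave a single vertex
  of W, as all its neighbours would lie in X and R. At the end every part is k-connected, and
  if 2 alpha k <= delta every removed vertex has k neighbours in some part, to which it can be
  added without destroying k-connectivity.
  With k = delta / (20 alpha log n) this yields at most alpha parts, each of size at least
  delta + 1 - delta / (20 log n) >= delta / log n, and the parts with fewer than
  n / (10 alpha) vertices cover at most n / 10 vertices.
*)
theory Submission
  imports Defs "HOL-Library.Disjoint_Sets" "HOL-Analysis.Harmonic_Numbers"
begin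

definition k_connected :: "'a set \<Rightarrow> ('a \<Rightarrow> 'a \<Rightarrow> bool) \<Rightarrow> real \<Rightarrow> bool" where
  "k_connected S E k \<longleftrightarrow>
     (\<forall>X\<subseteq>S. real (card X) < k \<longrightarrow> connected_on (S - X) E \<and> card (S - X) \<noteq> 1)"

lemma k_connected_imp_vertex_connectivity_ge:
  assumes "finite S" "S \<noteq> {}" "k_connected S E k"
  shows "k \<le> real (vertex_connectivity S E)"
proof -
  let ?M = "{card X | X. X \<subseteq> S \<and> (\<not> connected_on (S - X) E \<or> card (S - X) = 1)}"
  obtain v where "v \<in> S" using assms(2) by blast
  then have "card (S - (S - {v})) = 1" by (simp add: Diff_Diff_Int)
  then have "card (S - {v}) \<in> ?M" by blast
  moreover have "finite ?M"
    by (rule finite_subset[of _ "card ` Pow S"]) (use assms(1) in auto)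
  ultimately have "Min ?M \<in> ?M" using Min_in by blast
  then obtain X where X: "X \<subseteq> S" "\<not> connected_on (S - X) E \<or> card (S - X) = 1"
    and vc: "vertex_connectivity S E = card X"
    unfolding vertex_connectivity_def by auto
  have "\<not> real (card X) < k" using assms(3) X unfolding k_connected_def by blast
  then show ?thesis using vc by simp
qed

lemma connected_on_insert:
  assumes conn: "connected_on S E" and "u \<in> S" "E v u" "symp E"
  shows "connected_on (insert v S) E"
proof -
  let ?R = "\<lambda>x y. x \<in> insert v S \<and> y \<in> insert v S \<and> E x y"
  have lift: "?R\<^sup>*\<^sup>* a b" if "a \<in> S" "b \<in> S" for a b
  proof -
    have "(\<lambda>x y. x \<in> S \<and> y \<in> S \<and> E x y)\<^sup>*\<^sup>* a b"
      using conn that unfolding connected_on_def by blast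
    then show ?thesis by (rule rtranclp_mono[THEN predicate2D, rotated]) auto
  qed
  have "?R v u" "?R u v" using assms(2-4) by (auto dest: sympD)
  then have via_u: "?R\<^sup>*\<^sup>* a u \<and> ?R\<^sup>*\<^sup>* u a" if "a \<in> insert v S" for a
    using that lift[of a u] lift[of u a] \<open>u \<in> S\<close> by auto
  show ?thesis
    unfolding connected_on_def
  proof (intro ballI)
    fix a b assume "a \<in> insert v S" "b \<in> insert v S"
    then show "?R\<^sup>*\<^sup>* a b" using via_u rtranclp_trans[of ?R a u b] by blast
  qed
qed

lemma not_connected_onE:
  assumes "\<not> connected_on S E"
  obtains A B where "A \<noteq> {}" "B \<noteq> {}" "A \<union> B = S" "A \<inter> B = {}" "\<forall>a\<in>A. \<forall>b\<in>B. \<not> E a b"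
proof -
  let ?R = "\<lambda>x y. x \<in> S \<and> y \<in> S \<and> E x y"
  obtain u v where uv: "u \<in> S" "v \<in> S" "\<not> ?R\<^sup>*\<^sup>* u v"
    using assms unfolding connected_on_def by blast
  define A where "A = {w\<in>S. ?R\<^sup>*\<^sup>* u w}"
  have "\<not> E a b" if "a \<in> A" "b \<in> S - A" for a b
    using that rtranclp.rtrancl_into_rtrancl[of ?R u a b] unfolding A_def by auto
  moreover have "u \<in> A" "v \<in> S - A" "A \<subseteq> S" using uv unfolding A_def by auto
  ultimately show ?thesis using that[of A "S - A"] by blast
qed

lemma k_connected_insert:
  assumes "k_connected H E k" "finite H" "v \<notin> H" "symp E"
    and "k \<le> real (card {u\<in>H. E v u})"
  shows "k_connected (insert v H) E k"
  unfolding k_connected_def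
proof (intro allI impI)
  fix X assume X: "X \<subseteq> insert v H" "real (card X) < k"
  show "connected_on (insert v H - X) E \<and> card (insert v H - X) \<noteq> 1"
  proof (cases "v \<in> X")
    case True
    have "X - {v} \<subseteq> H" using X(1) by blast
    moreover have "real (card (X - {v})) < k" using X(2) card_Diff1_le[of X v] by linarith
    ultimately have "connected_on (H - (X - {v})) E \<and> card (H - (X - {v})) \<noteq> 1"
      using assms(1) unfolding k_connected_def by blast
    moreover have "insert v H - X = H - (X - {v})" using True assms(3) by auto
    ultimately show ?thesis by simp
  next
    case False
    then have "X \<subseteq> H" using X(1) by auto
    then have conn: "connected_on (H - X) E" and "card (H - X) \<noteq> 1"
      using assms(1) X(2) unfolding k_connected_def by auto
    have "\<not> {u\<in>H. E v u} \<subseteq> X"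
    proof
      assume "{u\<in>H. E v u} \<subseteq> X"
      then have "card {u\<in>H. E v u} \<le> card X"
        by (rule card_mono[OF finite_subset[OF \<open>X \<subseteq> H\<close> assms(2)]])
      then show False using X(2) assms(5) by linarith
    qed
    then obtain u where u: "u \<in> H - X" "E v u" by auto
    have "card (insert v (H - X)) = Suc (card (H - X))"
      using assms(2,3) by (simp add: card_insert_disjoint)
    moreover have "card (H - X) \<noteq> 0" using u(1) assms(2) by auto
    moreover have "insert v H - X = insert v (H - X)" using False by auto
    ultimately show ?thesis using connected_on_insert[OF conn u assms(4)] by simp
  qed
qed

lemma k_connected_Un:
  assumes "k_connected W E k" "finite W" "finite S" "S \<inter> W = {}" "symp E"
    and "\<And>s. s \<in> S \<Longrightarrow> k \<le> real (card {u\<in>W. E s u})"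
  shows "k_connected (W \<union> S) E k"
  using assms(3,4,6)
proof (induction S rule: finite_induct)
  case empty
  then show ?case using assms(1) by simp
next
  case (insert s S)
  have "card {u\<in>W. E s u} \<le> card {u\<in>W \<union> S. E s u}"
    using insert(1) assms(2) by (intro card_mono) auto
  then have "k \<le> real (card {u\<in>W \<union> S. E s u})" using insert(5)[of s] by simp
  moreover have "k_connected (W \<union> S) E k" using insert by auto
  ultimately have "k_connected (insert s (W \<union> S)) E k"
    using insert(1,2,4) assms(2,5) by (intro k_connected_insert) auto
  then show ?case by simp
qed

lemma simple_graph_symp: "simple_graph V E \<Longrightarrow> symp E"
  unfolding simple_graph_def by (auto intro: sympI)

lemma card_le_indep_num:
  assumes "simple_graph V E" "independent_set V E I"
  shows "card I \<le> indep_num V E"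
proof -
  have "{card I | I. independent_set V E I} \<subseteq> card ` Pow V"
    unfolding independent_set_def by auto
  moreover have "finite V" using assms(1) unfolding simple_graph_def by simp
  ultimately have "finite {card I | I. independent_set V E I}"
    by (meson finite_Pow_iff finite_imageI finite_subset)
  then show ?thesis unfolding indep_num_def using assms(2) by (auto intro: Max_ge)
qed

lemma indep_num_pos:
  assumes "simple_graph V E" "V \<noteq> {}"
  shows "0 < indep_num V E"
proof -
  obtain v where "v \<in> V" using assms(2) by blast
  then have "independent_set V E {v}"
    using assms(1) unfolding independent_set_def simple_graph_def by simp
  then show ?thesis using card_le_indep_num[OF assms(1)] by fastforce
qed

lemma min_degree_le_card_neighbours:
  assumes "simple_graph V E" "v \<in> V"
  shows "min_degree V E \<le> card {u\<in>V. E v u}"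
  using assms unfolding simple_graph_def min_degree_def degree_def by (auto intro: Min_le)

lemma min_degree_less_card:
  assumes "simple_graph V E" "V \<noteq> {}"
  shows "min_degree V E < card V"
proof -
  obtain v where v: "v \<in> V" using assms(2) by blast
  have "finite V" using assms(1) unfolding simple_graph_def by simp
  moreover have "{u\<in>V. E v u} \<subseteq> V - {v}" using assms(1) unfolding simple_graph_def by auto
  ultimately have "card {u\<in>V. E v u} \<le> card (V - {v})" by (intro card_mono) auto
  also have "\<dots> < card V" using \<open>finite V\<close> v by (rule card_Diff1_less)
  finally show ?thesis using min_degree_le_card_neighbours[OF assms(1) v] by linarith
qed

definition separated :: "('a \<Rightarrow> 'a \<Rightarrow> bool) \<Rightarrow> 'a set \<Rightarrow> 'a set \<Rightarrow> bool" where
  "separated E A B \<longleftrightarrow> A \<inter> B = {} \<and> (\<forall>u\<in>A. \<forall>v\<in>B. \<not> E u v)"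

lemma separated_sym: "symp E \<Longrightarrow> separated E A B \<Longrightarrow> separated E B A"
  unfolding separated_def by (auto dest: sympD)

lemma separated_mono: "separated E A B \<Longrightarrow> A' \<subseteq> A \<Longrightarrow> B' \<subseteq> B \<Longrightarrow> separated E A' B'"
  unfolding separated_def by blast

lemma card_le_indep_num_if_separated:
  assumes "simple_graph V E" "\<Union>\<W> \<subseteq> V" "{} \<notin> \<W>" "pairwise (separated E) \<W>"
  shows "card \<W> \<le> indep_num V E"
proof -
  define f where "f W = (SOME x. x \<in> W)" for W :: "'a set"
  have f: "f W \<in> W" if "W \<in> \<W>" for W
    using that assms(3) unfolding f_def by (auto simp: some_in_eq)
  have "inj_on f \<W>"
  proof (rule inj_onI)
    fix A B assume "A \<in> \<W>" "B \<in> \<W>" "f A = f B"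
    then have "f A \<in> A \<inter> B" using f[of A] f[of B] by simp
    then show "A = B"
      using assms(4) \<open>A \<in> \<W>\<close> \<open>B \<in> \<W>\<close> unfolding pairwise_def separated_def by blast
  qed
  moreover have "independent_set V E (f ` \<W>)"
    unfolding independent_set_def
  proof (intro conjI ballI)
    show "f ` \<W> \<subseteq> V" using f assms(2) by blast
    fix a b assume "a \<in> f ` \<W>" "b \<in> f ` \<W>"
    then obtain A B where AB: "A \<in> \<W>" "B \<in> \<W>" "a = f A" "b = f B" by blast
    show "\<not> E a b"
    proof (cases "A = B")
      case True
      then show ?thesis using AB(3,4) assms(1) unfolding simple_graph_def by simp
    next
      case False
      then have "separated E A B" using assms(4) AB(1,2) unfolding pairwise_def by blast
      then show ?thesis using f AB unfolding separated_def by blast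
    qed
  qed
  ultimately show ?thesis using card_le_indep_num[OF assms(1)] card_image by fastforce
qed

lemma pairwise_separated_split:
  assumes "pairwise (separated E) \<W>" "{} \<notin> \<W>" "finite \<W>" "symp E" "W \<in> \<W>"
    and "A \<noteq> {}" "B \<noteq> {}" "A \<union> B \<subseteq> W" "separated E A B"
  defines "\<W>' \<equiv> insert A (insert B (\<W> - {W}))"
  shows "pairwise (separated E) \<W>'" "{} \<notin> \<W>'" "card \<W>' = card \<W> + 1"
proof -
  have "separated E C W" if "C \<in> \<W> - {W}" for C
    using that assms(1,5) unfolding pairwise_def by blast
  then have CAB: "separated E C A \<and> separated E C B" if "C \<in> \<W> - {W}" for C
    using that assms(8) separated_mono[of E C W] by blast
  with assms(4) have "separated E D C \<and> separated E C D" if "C \<in> \<W> - {W}" "D \<in> {A, B}" for C D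
    using that separated_sym by blast
  moreover have "separated E B A" using assms(4,9) by (rule separated_sym)
  moreover have "pairwise (separated E) (\<W> - {W})" using assms(1) by (rule pairwise_subset) blast
  ultimately show "pairwise (separated E) \<W>'" using assms(9) unfolding \<W>'_def pairwise_insert by blast
  show "{} \<notin> \<W>'" using assms(2,6,7) unfolding \<W>'_def by blast
  have "A \<notin> \<W> - {W}" "B \<notin> \<W> - {W}" "A \<noteq> B"
    using CAB assms(6,7,9) unfolding separated_def by blast+
  moreover have "Suc (card (\<W> - {W})) = card \<W>" using assms(3,5) by (rule card_Suc_Diff1)
  ultimately show "card \<W>' = card \<W> + 1" unfolding \<W>'_def using assms(3) by simp
qed

text \<open>The budget inequality holds because each cut removes fewer than k vertices and adds
  one part.\<close>
definition cut_configuration ::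
    "'a set \<Rightarrow> ('a \<Rightarrow> 'a \<Rightarrow> bool) \<Rightarrow> real \<Rightarrow> 'a set set \<Rightarrow> 'a set \<Rightarrow> bool" where
  "cut_configuration V E k \<W> R \<longleftrightarrow>
     {} \<notin> \<W> \<and> pairwise (separated E) \<W> \<and> \<Union>\<W> \<union> R = V \<and> R \<inter> \<Union>\<W> = {} \<and>
     real (card R) + k \<le> real (card \<W>) * k"

lemma cut_configuration_initial: "V \<noteq> {} \<Longrightarrow> cut_configuration V E k {V} {}"
  unfolding cut_configuration_def by simp

lemma cut_configuration_subset: "cut_configuration V E k \<W> R \<Longrightarrow> W \<in> \<W> \<Longrightarrow> W \<subseteq> V"
  unfolding cut_configuration_def by blast

lemma cut_configuration_finite:
  "cut_configuration V E k \<W> R \<Longrightarrow> finite V \<Longrightarrow> finite \<W> \<and> finite R"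
  unfolding cut_configuration_def by (metis finite_UnionD finite_Un)

lemma cut_configuration_card_le_indep_num:
  assumes "simple_graph V E" "cut_configuration V E k \<W> R"
  shows "card \<W> \<le> indep_num V E"
  using assms by (intro card_le_indep_num_if_separated) (auto simp: cut_configuration_def)

lemma cut_configuration_remainder_bound:
  assumes "simple_graph V E" "cut_configuration V E k \<W> R" "0 \<le> k"
  shows "real (card R) + k \<le> real (indep_num V E) * k"
proof -
  have "real (card \<W>) * k \<le> real (indep_num V E) * k"
    using cut_configuration_card_le_indep_num[OF assms(1,2)] assms(3) by (simp add: mult_right_mono)
  then show ?thesis using assms(2) unfolding cut_configuration_def by linarith
qed

lemma min_degree_le_card_part:
  assumes "simple_graph V E" "cut_configuration V E k \<W> R" "W \<in> \<W>" "v \<in> W"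
  shows "min_degree V E \<le> card (W - {v}) + card R"
proof -
  have fin: "finite (W - {v})" "finite R"
    using assms cut_configuration_finite[OF assms(2)] unfolding simple_graph_def
    by (auto intro: finite_subset simp: cut_configuration_def)
  have "{u\<in>V. E v u} \<subseteq> (W - {v}) \<union> R"
  proof
    fix u assume u: "u \<in> {u\<in>V. E v u}"
    then have "u \<noteq> v" using assms(1) unfolding simple_graph_def by auto
    moreover have "u \<notin> C" if "C \<in> \<W>" "C \<noteq> W" for C
      using assms(2-4) that u unfolding cut_configuration_def pairwise_def separated_def by blast
    ultimately show "u \<in> (W - {v}) \<union> R"
      using u assms(2) unfolding cut_configuration_def by blast
  qed
  then have "card {u\<in>V. E v u} \<le> card ((W - {v}) \<union> R)"
    using fin by (intro card_mono) auto
  also have "\<dots> \<le> card (W - {v}) + card R" by (rule card_Un_le)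
  moreover have "v \<in> V" using assms(2-4) unfolding cut_configuration_def by blast
  ultimately show ?thesis using min_degree_le_card_neighbours[OF assms(1)] le_trans by blast
qed

lemma cut_configuration_split:
  assumes "cut_configuration V E k \<W> R" "finite V" "symp E"
    and "W \<in> \<W>" "X \<subseteq> W" "real (card X) < k" "\<not> connected_on (W - X) E"
  obtains \<W>' R' where "cut_configuration V E k \<W>' R'" "card \<W>' = card \<W> + 1"
proof -
  obtain A B where AB: "A \<noteq> {}" "B \<noteq> {}" "A \<union> B = W - X" "A \<inter> B = {}"
    "\<forall>a\<in>A. \<forall>b\<in>B. \<not> E a b"
    using assms(7) by (rule not_connected_onE)
  define \<W>' where "\<W>' = insert A (insert B (\<W> - {W}))"
  have fin: "finite \<W>" "finite R" "finite X"
    using cut_configuration_finite[OF assms(1,2)] finite_subset[OF _ assms(2)]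
      cut_configuration_subset[OF assms(1,4)] assms(5) by auto
  have "separated E A B" using AB(4,5) unfolding separated_def by blast
  then have sep': "pairwise (separated E) \<W>'" "{} \<notin> \<W>'" and card': "card \<W>' = card \<W> + 1"
    using pairwise_separated_split[of E \<W> W A B] assms(1,3,4) fin(1) AB(1-3)
    unfolding \<W>'_def cut_configuration_def by auto
  have "R \<inter> X = {}" using assms(1,4,5) unfolding cut_configuration_def by blast
  then have "card (R \<union> X) = card R + card X" using fin(2,3) by (rule card_Un_disjoint[rotated 2])
  then have "real (card (R \<union> X)) + k = (real (card R) + k) + real (card X)" by simp
  also have "\<dots> \<le> real (card \<W>) * k + k"
    using assms(1,6) unfolding cut_configuration_def by linarith
  also have "\<dots> = real (card \<W>') * k" using card' by (simp add: distrib_right)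
  finally have budget: "real (card (R \<union> X)) + k \<le> real (card \<W>') * k" .
  define U where "U = \<Union>(\<W> - {W})"
  have "\<Union>\<W>' = U \<union> (W - X)" unfolding \<W>'_def U_def using AB(3) by blast
  moreover have "\<Union>\<W> = U \<union> W" unfolding U_def using assms(4) by blast
  then have "U \<union> W \<union> R = V" "R \<inter> (U \<union> W) = {}"
    using assms(1) unfolding cut_configuration_def by simp_all
  moreover have "C \<inter> W = {}" if "C \<in> \<W> - {W}" for C
    using that assms(1,4) unfolding cut_configuration_def pairwise_def separated_def by blast
  then have "X \<inter> U = {}" unfolding U_def using assms(5) by blast
  ultimately have "\<Union>\<W>' \<union> (R \<union> X) = V" "(R \<union> X) \<inter> \<Union>\<W>' = {}" using assms(5) by blast+
  then have "cut_configuration V E k \<W>' (R \<union> X)"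
    using sep' budget unfolding cut_configuration_def by blast
  then show ?thesis using that card' by blast
qed

lemma cut_configuration_no_singleton_cut:
  assumes G: "simple_graph V E" and cf: "cut_configuration V E k \<W> R" and "0 \<le> k"
    and deg: "real (indep_num V E) * k \<le> real (min_degree V E)"
    and W: "W \<in> \<W>" and X: "X \<subseteq> W" "real (card X) < k"
  shows "card (W - X) \<noteq> 1"
proof
  assume "card (W - X) = 1"
  then obtain v where "W - X = {v}" by (rule card_1_singletonE)
  then have "v \<in> W" "W - {v} \<subseteq> X" by auto
  have "finite X"
    using X(1) cut_configuration_subset[OF cf W] G unfolding simple_graph_def
    by (blast intro: finite_subset)
  have "min_degree V E \<le> card (W - {v}) + card R"
    using min_degree_le_card_part[OF G cf W \<open>v \<in> W\<close>] .
  moreover have "card (W - {v}) \<le> card X" using \<open>finite X\<close> \<open>W - {v} \<subseteq> X\<close> by (rule card_mono)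
  ultimately have "real (min_degree V E) < k + real (card R)" using X(2) by linarith
  then show False using cut_configuration_remainder_bound[OF G cf \<open>0 \<le> k\<close>] deg by linarith
qed

lemma exists_k_connected_cut_configuration:
  assumes G: "simple_graph V E" and "0 \<le> k"
    and deg: "real (indep_num V E) * k \<le> real (min_degree V E)"
    and "cut_configuration V E k \<W> R"
  shows "\<exists>\<W>' R'. cut_configuration V E k \<W>' R' \<and> (\<forall>W\<in>\<W>'. k_connected W E k)"
  using assms(4)
proof (induction "indep_num V E + 1 - card \<W>" arbitrary: \<W> R rule: less_induct)
  case less
  show ?case
  proof (cases "\<forall>W\<in>\<W>. k_connected W E k")
    case True
    then show ?thesis using less.prems by blast
  next
    case False
    then obtain W X where W: "W \<in> \<W>" and X: "X \<subseteq> W" "real (card X) < k"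
      and cut: "\<not> connected_on (W - X) E \<or> card (W - X) = 1"
      unfolding k_connected_def by blast
    then have "\<not> connected_on (W - X) E"
      using cut_configuration_no_singleton_cut[OF G less.prems \<open>0 \<le> k\<close> deg W X] by blast
    moreover have "finite V" "symp E" using G simple_graph_symp unfolding simple_graph_def by auto
    ultimately obtain \<W>' R' where cf': "cut_configuration V E k \<W>' R'"
      and card': "card \<W>' = card \<W> + 1"
      using cut_configuration_split[OF less.prems _ _ W X] by blast
    have "card \<W>' \<le> indep_num V E" using cut_configuration_card_le_indep_num[OF G cf'] .
    then show ?thesis by (intro less.hyps[OF _ cf']) (use card' in linarith)
  qed
qed

lemma min_degree_le_neighbours_in_parts:
  assumes G: "simple_graph V E" and cf: "cut_configuration V E k \<W> R" and r: "r \<in> R"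
  shows "real (min_degree V E) \<le> (\<Sum>W\<in>\<W>. real (card {u\<in>W. E r u})) + real (card R)"
proof -
  have "finite V" "finite \<W>" using cut_configuration_finite[OF cf] G unfolding simple_graph_def by auto
  have "{u\<in>V. E r u} \<subseteq> (\<Union>W\<in>\<W>. {u\<in>W. E r u}) \<union> R"
    using cf unfolding cut_configuration_def by blast
  moreover have "(\<Union>W\<in>\<W>. {u\<in>W. E r u}) \<union> R \<subseteq> V"
    using cf unfolding cut_configuration_def by blast
  then have "finite ((\<Union>W\<in>\<W>. {u\<in>W. E r u}) \<union> R)" using \<open>finite V\<close> by (rule finite_subset)
  ultimately have "card {u\<in>V. E r u} \<le> card ((\<Union>W\<in>\<W>. {u\<in>W. E r u}) \<union> R)"
    by (intro card_mono)
  also have "\<dots> \<le> card (\<Union>W\<in>\<W>. {u\<in>W. E r u}) + card R" by (rule card_Un_le)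
  also have "\<dots> \<le> (\<Sum>W\<in>\<W>. card {u\<in>W. E r u}) + card R" using card_UN_le[OF \<open>finite \<W>\<close>] by simp
  moreover have "r \<in> V" using r cf unfolding cut_configuration_def by blast
  ultimately have "min_degree V E \<le> (\<Sum>W\<in>\<W>. card {u\<in>W. E r u}) + card R"
    using min_degree_le_card_neighbours[OF G] by (meson order_trans)
  then have "real (min_degree V E) \<le> real ((\<Sum>W\<in>\<W>. card {u\<in>W. E r u}) + card R)"
    by (rule of_nat_mono)
  then show ?thesis by simp
qed

lemma remainder_vertex_has_dense_part:
  assumes G: "simple_graph V E" and cf: "cut_configuration V E k \<W> R" and "0 \<le> k"
    and deg: "2 * real (indep_num V E) * k \<le> real (min_degree V E)" and r: "r \<in> R"
  shows "\<exists>W\<in>\<W>. k \<le> real (card {u\<in>W. E r u})"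
proof (rule ccontr)
  assume "\<not> ?thesis"
  then have sparse: "\<And>W. W \<in> \<W> \<Longrightarrow> real (card {u\<in>W. E r u}) < k" by auto
  have fin: "finite \<W>" "finite R"
    using cut_configuration_finite[OF cf] G unfolding simple_graph_def by auto
  have budget: "real (card R) + k \<le> real (card \<W>) * k"
    using cf unfolding cut_configuration_def by blast
  have "\<W> \<noteq> {}"
  proof
    assume "\<W> = {}"
    moreover have "card R \<noteq> 0" using fin(2) r by auto
    ultimately show False using budget \<open>0 \<le> k\<close> by simp
  qed
  have "(\<Sum>W\<in>\<W>. real (card {u\<in>W. E r u})) < (\<Sum>W\<in>\<W>. k)"
    using fin(1) \<open>\<W> \<noteq> {}\<close> sparse by (rule sum_strict_mono)
  then have "real (min_degree V E) < real (card \<W>) * k + real (card R)"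
    using min_degree_le_neighbours_in_parts[OF G cf r] by simp
  moreover have "real (card \<W>) * k \<le> real (indep_num V E) * k"
    using cut_configuration_card_le_indep_num[OF G cf] \<open>0 \<le> k\<close> by (simp add: mult_right_mono)
  ultimately show False using budget deg \<open>0 \<le> k\<close> by linarith
qed

lemma absorb_remainder:
  assumes cf: "cut_configuration V E k \<W> R" and "finite V" "symp E"
    and conn: "\<forall>W\<in>\<W>. k_connected W E k"
    and dense: "\<And>r. r \<in> R \<Longrightarrow> \<exists>W\<in>\<W>. k \<le> real (card {u\<in>W. E r u})"
  obtains \<P> where "partition_on V \<P>" "card \<P> \<le> card \<W>"
    "\<And>P. P \<in> \<P> \<Longrightarrow> k_connected P E k \<and> (\<exists>W\<in>\<W>. W \<subseteq> P)"
proof -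
  have "\<forall>r\<in>R. \<exists>W. W \<in> \<W> \<and> k \<le> real (card {u\<in>W. E r u})" using dense by blast
  then obtain g where g: "\<forall>r\<in>R. g r \<in> \<W> \<and> k \<le> real (card {u\<in>g r. E r u})"
    by (rule bchoice[THEN exE])
  define P where "P W = W \<union> {r\<in>R. g r = W}" for W
  have fin: "finite \<W>" "finite R" using cut_configuration_finite[OF cf \<open>finite V\<close>] by auto
  have sep: "pairwise (separated E) \<W>" and cover: "\<Union>\<W> \<union> R = V" "R \<inter> \<Union>\<W> = {}"
    and ne: "{} \<notin> \<W>"
    using cf unfolding cut_configuration_def by blast+
  show ?thesis
  proof (rule that[of "P ` \<W>"])
    show "partition_on V (P ` \<W>)"
    proof (rule partition_onI)
      show "\<Union>(P ` \<W>) = V" using cover g unfolding P_def by blast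
      have "P W \<noteq> {}" if "W \<in> \<W>" for W using that ne unfolding P_def by auto
      then show "{} \<notin> P ` \<W>" by (metis imageE)
      fix p q assume "p \<in> P ` \<W>" "q \<in> P ` \<W>" "p \<noteq> q"
      then obtain A B where AB: "A \<in> \<W>" "B \<in> \<W>" "A \<noteq> B" "p = P A" "q = P B" by blast
      then have "A \<inter> B = {}" using sep unfolding pairwise_def separated_def by blast
      moreover have "A \<inter> R = {}" "B \<inter> R = {}" using AB(1,2) cover(2) by blast+
      ultimately show "disjnt p q" using AB(3-5) unfolding P_def disjnt_def by auto
    qed
    show "card (P ` \<W>) \<le> card \<W>" using fin(1) by (rule card_image_le)
    fix Q assume "Q \<in> P ` \<W>"
    then obtain W where W: "W \<in> \<W>" "Q = P W" by blast
    have "k_connected (W \<union> {r\<in>R. g r = W}) E k"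
    proof (rule k_connected_Un)
      show "finite W" using cut_configuration_subset[OF cf W(1)] \<open>finite V\<close> by (rule finite_subset)
    qed (use W(1) conn fin(2) cover(2) g \<open>symp E\<close> in auto)
    then show "k_connected Q E k \<and> (\<exists>W\<in>\<W>. W \<subseteq> Q)" using W unfolding P_def by blast
  qed
qed

theorem partition_into_k_connected_parts:
  assumes G: "simple_graph V E" and "V \<noteq> {}" "0 \<le> k"
    and deg: "2 * real (indep_num V E) * k \<le> real (min_degree V E)"
  obtains \<P> where "partition_on V \<P>" "card \<P> \<le> indep_num V E"
    "\<And>P. P \<in> \<P> \<Longrightarrow> k \<le> real (vertex_connectivity P E)"
    "\<And>P. P \<in> \<P> \<Longrightarrow> real (min_degree V E) + 1 - real (indep_num V E) * k \<le> real (card P)"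
proof -
  have fin: "finite V" and sym: "symp E" using G simple_graph_symp unfolding simple_graph_def by auto
  have "real (indep_num V E) * k \<le> real (min_degree V E)" using deg \<open>0 \<le> k\<close> by simp
  then obtain \<W> R where cf: "cut_configuration V E k \<W> R" and conn: "\<forall>W\<in>\<W>. k_connected W E k"
    using exists_k_connected_cut_configuration[OF G \<open>0 \<le> k\<close>]
      cut_configuration_initial[OF \<open>V \<noteq> {}\<close>] by blast
  obtain \<P> where part: "partition_on V \<P>" and card: "card \<P> \<le> card \<W>"
    and parts: "\<And>P. P \<in> \<P> \<Longrightarrow> k_connected P E k \<and> (\<exists>W\<in>\<W>. W \<subseteq> P)"
    using absorb_remainder[OF cf fin sym conn remainder_vertex_has_dense_part[OF G cf \<open>0 \<le> k\<close> deg]]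
    by blast
  show ?thesis
  proof (rule that[OF part])
    show "card \<P> \<le> indep_num V E" using card cut_configuration_card_le_indep_num[OF G cf] by simp
    fix P assume P: "P \<in> \<P>"
    have "finite P" using P part fin by (metis partition_onD1 Union_upper finite_subset)
    moreover have "P \<noteq> {}" using P partition_onD3[OF part] by blast
    ultimately show "k \<le> real (vertex_connectivity P E)"
      using parts[OF P] k_connected_imp_vertex_connectivity_ge by blast
    obtain W where "W \<in> \<W>" "W \<subseteq> P" using parts[OF P] by blast
    moreover have "W \<noteq> {}" using cf \<open>W \<in> \<W>\<close> unfolding cut_configuration_def by blast
    ultimately obtain v where W: "W \<in> \<W>" "W \<subseteq> P" "v \<in> W" by blast
    have "Suc (card (W - {v})) = card W"
      using finite_subset[OF W(2) \<open>finite P\<close>] W(3) by (rule card_Suc_Diff1)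
    moreover have "card W \<le> card P" using \<open>finite P\<close> W(2) by (rule card_mono)
    ultimately have "card (W - {v}) + 1 \<le> card P" by simp
    then have "real (min_degree V E) + 1 \<le> real (card P) + real (card R)"
      using min_degree_le_card_part[OF G cf W(1,3)] by linarith
    then show "real (min_degree V E) + 1 - real (indep_num V E) * k \<le> real (card P)"
      using cut_configuration_remainder_bound[OF G cf \<open>0 \<le> k\<close>] \<open>0 \<le> k\<close> by linarith
  qed
qed

lemma ln_nat_lower_bound:
  fixes n :: nat
  assumes "2 \<le> n"
  shows "21 * (real n - 1) \<le> 20 * real n * ln (real n)"
proof -
  consider "n = 2" | "n = 3" | "4 \<le> n" using assms by linarith
  then show ?thesis
  proof cases
    case 1
    then show ?thesis using ln2_ge_two_thirds by simp
  next
    case 2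
    have "1 \<le> ln (3::real)" using exp_le by (subst ln_ge_iff) auto
    then show ?thesis using 2 by simp
  next
    case 3
    have "ln (4::real) = 2 * ln 2" using ln_mult[of 2 2] by simp
    moreover have "ln 4 \<le> ln (real n)" using 3 by simp
    ultimately have "21 \<le> 20 * ln (real n)" using ln2_ge_two_thirds by linarith
    have "21 * (real n - 1) \<le> real n * 21" by simp
    also have "\<dots> \<le> real n * (20 * ln (real n))"
      using \<open>21 \<le> 20 * ln (real n)\<close> by (intro mult_left_mono) auto
    finally show ?thesis by (simp add: mult.assoc mult.left_commute)
  qed
qed

lemma div_ln_bound:
  fixes n :: nat and d :: real
  assumes "2 \<le> n" "0 \<le> d" "d \<le> real n - 1"
  shows "d / ln (real n) \<le> d + 1 - d / (20 * ln (real n))"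
proof -
  define L where "L = ln (real n)"
  have "0 < L" using assms(1) unfolding L_def by simp
  have "21 * d \<le> 20 * L * (d + 1)"
  proof (cases "21 \<le> 20 * L")
    case True
    then have "21 * d \<le> 20 * L * d" using assms(2) by (rule mult_right_mono)
    then show ?thesis using \<open>0 < L\<close> by (simp add: algebra_simps)
  next
    case False
    then have "(20 * L - 21) * (real n - 1) \<le> (20 * L - 21) * d"
      using assms(3) by (intro mult_left_mono_neg) auto
    moreover have "21 * (real n - 1) \<le> 20 * real n * L"
      using ln_nat_lower_bound[OF assms(1)] unfolding L_def .
    ultimately show ?thesis by (simp add: algebra_simps)
  qed
  then show ?thesis using \<open>0 < L\<close> unfolding L_def[symmetric] by (simp add: field_simps)
qed

lemma sum_above_threshold_ge:
  fixes h :: "'a \<Rightarrow> real"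
  assumes "finite I" "0 \<le> c"
  shows "(\<Sum>i\<in>I. h i) - real (card I) * c \<le> (\<Sum>i\<in>{i\<in>I. c \<le> h i}. h i)"
proof -
  have "(\<Sum>i\<in>I - {i. c \<le> h i}. h i) \<le> real (card (I - {i. c \<le> h i})) * c"
    by (rule sum_bounded_above) auto
  also have "\<dots> \<le> real (card I) * c"
    using assms by (intro mult_right_mono) (auto intro: card_mono)
  moreover have "(\<Sum>i\<in>I. h i) = (\<Sum>i\<in>{i\<in>I. c \<le> h i}. h i) + (\<Sum>i\<in>I - {i. c \<le> h i}. h i)"
    using sum.Int_Diff[OF assms(1), of h "{i. c \<le> h i}"] by (simp add: Int_def)
  ultimately show ?thesis by linarith
qed

lemma partition_on_enumerate:
  assumes "partition_on V \<P>" "finite V"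
  obtains P where "bij_betw P {1..card \<P>} \<P>"
    and "\<forall>i\<in>{1..card \<P>}. P i \<noteq> {}"
    and "\<forall>i\<in>{1..card \<P>}. \<forall>j\<in>{1..card \<P>}. i \<noteq> j \<longrightarrow> P i \<inter> P j = {}"
    and "(\<Union>i\<in>{1..card \<P>}. P i) = V"
    and "(\<Sum>i\<in>{1..card \<P>}. real (card (P i))) = real (card V)"
proof -
  have "finite \<P>" using assms by (metis partition_onD1 finite_UnionD)
  then obtain P where bij: "bij_betw P {1..card \<P>} \<P>" using ex_bij_betw_nat_finite_1 by blast
  have P: "P i \<in> \<P>" if "i \<in> {1..card \<P>}" for i using bij that by (rule bij_betw_apply)
  have "finite A" if "A \<in> \<P>" for A
    using that partition_onD1[OF assms(1)] assms(2) by (metis Union_upper finite_subset)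
  then have "card (\<Union>\<P>) = sum card \<P>" by (rule card_Union_disjoint[OF partition_onD2[OF assms(1)]])
  also have "\<dots> = (\<Sum>i\<in>{1..card \<P>}. card (P i))" using bij by (rule sum.reindex_bij_betw[symmetric])
  finally have "(\<Sum>i\<in>{1..card \<P>}. real (card (P i))) = real (card V)"
    using partition_onD1[OF assms(1)] by (metis of_nat_sum)
  moreover have "\<forall>i\<in>{1..card \<P>}. \<forall>j\<in>{1..card \<P>}. i \<noteq> j \<longrightarrow> P i \<inter> P j = {}"
  proof (intro ballI impI)
    fix i j assume ij: "i \<in> {1..card \<P>}" "j \<in> {1..card \<P>}" "i \<noteq> j"
    then have "P i \<noteq> P j" using bij_betw_imp_inj_on[OF bij] by (meson inj_on_contraD)
    then show "P i \<inter> P j = {}"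
      using partition_onD2[OF assms(1)] P ij unfolding pairwise_def disjnt_def by blast
  qed
  moreover have "(\<Union>i\<in>{1..card \<P>}. P i) = V"
    using bij_betw_imp_surj_on[OF bij] partition_onD1[OF assms(1)] by simp
  moreover have "\<forall>i\<in>{1..card \<P>}. P i \<noteq> {}" using P partition_onD3[OF assms(1)] by metis
  ultimately show ?thesis using that bij by blast
qed

lemma partition_with_log_bounds:
  assumes G: "simple_graph V E" and "card V = n" "2 \<le> n"
  obtains \<P> where "partition_on V \<P>" "card \<P> \<le> indep_num V E"
    "\<And>P. P \<in> \<P> \<Longrightarrow> real (min_degree V E) / ln (real n) \<le> real (card P)"
    "\<And>P. P \<in> \<P> \<Longrightarrow>
       real (min_degree V E) / (20 * real (indep_num V E) * ln (real n))
         \<le> real (vertex_connectivity P E)"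
proof -
  define a d L where "a = real (indep_num V E)" and "d = real (min_degree V E)"
    and "L = ln (real n)"
  define k where "k = d / (20 * a * L)"
  have "V \<noteq> {}" using assms(2,3) by auto
  have "ln 2 \<le> L" using assms(3) unfolding L_def by simp
  then have L: "2 / 3 \<le> L" using ln2_ge_two_thirds by linarith
  have "0 < a" "0 \<le> d" "d \<le> real n - 1"
    using indep_num_pos[OF G \<open>V \<noteq> {}\<close>] min_degree_less_card[OF G \<open>V \<noteq> {}\<close>] assms(2)
    unfolding a_def d_def by auto
  then have "0 \<le> k" unfolding k_def using L by simp
  have ak: "a * k = d / (20 * L)" unfolding k_def using \<open>0 < a\<close> L by (simp add: field_simps)
  then have "2 * a * k = d / (10 * L)" by simp
  also have "\<dots> \<le> d" using divide_left_mono[of 1 "10 * L" d] \<open>0 \<le> d\<close> L by simp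
  finally obtain \<P> where part: "partition_on V \<P>" and card: "card \<P> \<le> indep_num V E"
    and conn: "\<And>P. P \<in> \<P> \<Longrightarrow> k \<le> real (vertex_connectivity P E)"
    and size: "\<And>P. P \<in> \<P> \<Longrightarrow> d + 1 - a * k \<le> real (card P)"
    using partition_into_k_connected_parts[OF G \<open>V \<noteq> {}\<close> \<open>0 \<le> k\<close>]
    unfolding a_def d_def by blast
  have "d / L \<le> d + 1 - a * k"
    using div_ln_bound[OF assms(3) \<open>0 \<le> d\<close> \<open>d \<le> real n - 1\<close>] ak unfolding L_def by simp
  then show ?thesis
    using that[OF part card] size conn order_trans unfolding a_def d_def k_def L_def by blast
qed

theorem lemma2p12:
  fixes V :: "'a set" and E :: "'a \<Rightarrow> 'a \<Rightarrow> bool" and n :: nat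
  assumes "simple_graph V E" and "card V = n" and "n \<ge> 2"
  shows "\<exists>(t::nat) (P :: nat \<Rightarrow> 'a set).
     (\<forall>i\<in>{1..t}. P i \<noteq> {}) \<and>
     (\<forall>i\<in>{1..t}. \<forall>j\<in>{1..t}. i \<noteq> j \<longrightarrow> P i \<inter> P j = {}) \<and>
     (\<Union>i\<in>{1..t}. P i) = V \<and>
     real t \<le> 19 * real (indep_num V E) * ln (real n) \<and>
     (\<Sum>i\<in>{i\<in>{1..t}. real (card (P i)) \<ge> 0.1 * real n / real (indep_num V E)}.
        real (card (P i))) \<ge> real n / 2 \<and>
     (\<forall>i\<in>{1..t}. real (card (P i)) \<ge> real (min_degree V E) / ln (real n)) \<and>
     (\<forall>i\<in>{1..t}. real (vertex_connectivity (P i) E)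
        \<ge> real (min_degree V E) / (20 * real (indep_num V E) * ln (real n)))"
proof -
  define a where "a = real (indep_num V E)"
  have "finite V" "V \<noteq> {}" using assms unfolding simple_graph_def by auto
  then have "0 < a" unfolding a_def using indep_num_pos[OF assms(1)] by simp
  obtain \<P> where part: "partition_on V \<P>" and card: "real (card \<P>) \<le> a"
    and bounds: "\<And>P. P \<in> \<P> \<Longrightarrow> real (min_degree V E) / ln (real n) \<le> real (card P)"
      "\<And>P. P \<in> \<P> \<Longrightarrow> real (min_degree V E) / (20 * a * ln (real n))
         \<le> real (vertex_connectivity P E)"
    using partition_with_log_bounds[OF assms] unfolding a_def by (metis of_nat_le_iff)
  obtain P where bij: "bij_betw P {1..card \<P>} \<P>" and enum: "\<forall>i\<in>{1..card \<P>}. P i \<noteq> {}"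
      "\<forall>i\<in>{1..card \<P>}. \<forall>j\<in>{1..card \<P>}. i \<noteq> j \<longrightarrow> P i \<inter> P j = {}"
      "(\<Union>i\<in>{1..card \<P>}. P i) = V" "(\<Sum>i\<in>{1..card \<P>}. real (card (P i))) = real n"
    using partition_on_enumerate[OF part \<open>finite V\<close>] assms(2) by metis
  have "ln 2 \<le> ln (real n)" using assms(3) by simp
  then have "1 \<le> 19 * ln (real n)" using ln2_ge_two_thirds by linarith
  then have "a * 1 \<le> a * (19 * ln (real n))" using \<open>0 < a\<close> by (intro mult_left_mono) auto
  then have "real (card \<P>) \<le> 19 * a * ln (real n)" using card by (simp add: mult.left_commute)
  moreover have "real (card \<P>) * (0.1 * real n / a) \<le> 0.1 * real n"
    using mult_right_mono[OF card, of "0.1 * real n / a"] \<open>0 < a\<close> by simp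
  then have "real n / 2 \<le> (\<Sum>i\<in>{i\<in>{1..card \<P>}. 0.1 * real n / a \<le> real (card (P i))}.
      real (card (P i)))"
    using sum_above_threshold_ge[of "{1..card \<P>}" "0.1 * real n / a" "\<lambda>i. real (card (P i))"]
      enum(4) \<open>0 < a\<close> by simp
  ultimately show ?thesis
    using enum bounds bij_betw_apply[OF bij] unfolding a_def
    by (auto intro!: exI[of _ "card \<P>"] exI[of _ P])
qed

end
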